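(* Let $\Gamma=\{\boldsymbol\theta=(\theta_1,\theta_2,\dots)\in\mathbb{R}^{\infty}: \sum_{i\ge 1} i\,|\theta_i|\le 1\}$. Then $n_{\mathrm{est}}(\Gamma,\epsilon)=\tilde\Theta(\epsilon^{-8/3})$, i.e. there exist constants $c,C>0$ and $k\ge 0$ such that for all sufficiently small $\epsilon>0$, $$c\,\epsilon^{-8/3}\log^{-k}(1/\epsilon)\le n_{\mathrm{est}}(\Gamma,\epsilon)\le C\,\epsilon^{-8/3}\log^{k}(1/\epsilon).$$
   Context: Gaussian sequence model: for $D\in[1,\infty]$ and $\Gamma\subseteq\mathbb{R}^D$, the model is $\{\mathcal N(\boldsymbol\theta,I_D):\boldsymbol\theta\in\Gamma\}$ (for $D=\infty$, $I_\infty$ is the identity covariance, i.e. independent unit-variance coordinates). The density estimation sample complexity $n_{\mathrm{est}}(\Gamma,\epsilon)$ is the smallest integer $n$ such that, given $n$ i.i.d. samples $\mathbf X=(\mathbf X_1,\dots,\mathbf X_n)$ from $\mathcal N(\boldsymbol\theta,I_D)$, there is an estimator $\hat{\boldsymbol\theta}(\mathbf X)$ with $\sup_{\boldsymbol\theta\in\Gamma}\mathbb E\|\hat{\boldsymbol\theta}(\mathbf X)-\boldsymbol\theta\|_2^2\le\epsilon^2$. *)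

theory Defs
  imports "HOL-Probability.Probability"
begin

text \<open>Sequences in R^infinity are functions nat => real; coordinate i (0-based)
  corresponds to coordinate i+1 of the paper.  A sample of size n is a function
  on {..<n} x UNIV: X (j,i) is coordinate i of the j-th observation.\<close>

definition sample_space :: "nat \<Rightarrow> (nat \<times> nat \<Rightarrow> real) measure" where
  "sample_space n = PiM ({..<n} \<times> UNIV) (\<lambda>_. lborel)"

definition sample_dist :: "nat \<Rightarrow> (nat \<Rightarrow> real) \<Rightarrow> (nat \<times> nat \<Rightarrow> real) measure" where
  "sample_dist n \<theta> = PiM ({..<n} \<times> UNIV)
      (\<lambda>ji. density lborel (normal_density (\<theta> (snd ji)) 1))"

definition risk :: "nat \<Rightarrow> ((nat \<times> nat \<Rightarrow> real) \<Rightarrow> nat \<Rightarrow> real) \<Rightarrow> (nat \<Rightarrow> real) \<Rightarrow> ennreal" where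
  "risk n est \<theta> = (\<integral>\<^sup>+ X. (\<Sum>i. ennreal ((est X i - \<theta> i)\<^sup>2)) \<partial>sample_dist n \<theta>)"

definition achievable :: "(nat \<Rightarrow> real) set \<Rightarrow> real \<Rightarrow> nat \<Rightarrow> bool" where
  "achievable \<Gamma> \<epsilon> n \<longleftrightarrow>
     (\<exists>est. (\<forall>i. (\<lambda>X. est X i) \<in> borel_measurable (sample_space n)) \<and>
            (\<forall>\<theta>\<in>\<Gamma>. risk n est \<theta> \<le> ennreal (\<epsilon>\<^sup>2)))"

definition n_est :: "(nat \<Rightarrow> real) set \<Rightarrow> real \<Rightarrow> nat" where
  "n_est \<Gamma> \<epsilon> = (LEAST n. achievable \<Gamma> \<epsilon> n)"

definition Gamma_weighted :: "(nat \<Rightarrow> real) set" where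
  "Gamma_weighted = {\<theta>. summable (\<lambda>i. real (i + 1) * \<bar>\<theta> i\<bar>) \<and>
                         (\<Sum>i. real (i + 1) * \<bar>\<theta> i\<bar>) \<le> 1}"

end

theory Submission
  imports Defs "HOL-Real_Asymp.Real_Asymp"
begin

(*
  Lower bound (Assouad): give the d coordinates d, ..., 2d-1 of theta the values +-delta with
  delta = 1/(2 d^2); all 2^d such sequences lie in Gamma.  Flipping the sign of one coordinate changes
  the law of the sample by the likelihood ratio exp (+-delta S - n delta^2/2) of its column sum S,
  which stays of order one while n delta^2 <= 1/8, so every coordinate costs delta^2/16 on average.
  Hence eps^2 >= d delta^2/32 = 1/(128 d^3) unless n > d^4/2, and d ~ eps^(-2/3) gives n >~ eps^(-8/3).

  Upper bound: estimate theta_i for i < n by hard-thresholding the mean of column i at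
  tau = 8 sqrt (log n / n), and by 0 beyond.  Coordinate i then costs at most 5 min (tau^2, tau |theta_i|)
  plus a Gaussian tail term; splitting the sum at d ~ tau^(-1/2) and using sum (i+1) |theta_i| <= 1 gives
  risk <~ d tau^2 + tau/d ~ (log n / n)^(3/4), which is below eps^2 for n ~ eps^(-8/3) log (1/eps).
*)

section \<open>Products of independent coordinates\<close>

lemma indicator_prod_emb_PiE:
  assumes "finite J" "J \<subseteq> I" "X \<in> space (PiM I M)"
  shows "indicator (prod_emb I M J (Pi\<^sub>E J F)) X = (\<Prod>k\<in>J. indicator (F k) (X k) :: ennreal)"
proof -
  have "X \<in> prod_emb I M J (Pi\<^sub>E J F) \<longleftrightarrow> (\<forall>k\<in>J. X k \<in> F k)"
    using assms by (auto simp: prod_emb_def PiE_iff space_PiM)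
  then show ?thesis
    using assms(1) by (auto simp: indicator_def)
qed

lemma (in product_prob_space) nn_integral_PiM_prod:
  fixes f :: "'i \<Rightarrow> 'a \<Rightarrow> ennreal"
  assumes K: "finite K" "K \<subseteq> I" and f: "\<And>k. k \<in> K \<Longrightarrow> f k \<in> borel_measurable (M k)"
  shows "(\<integral>\<^sup>+ X. (\<Prod>k\<in>K. f k (X k)) \<partial>PiM I M) = (\<Prod>k\<in>K. \<integral>\<^sup>+ x. f k x \<partial>M k)"
proof -
  have "(\<integral>\<^sup>+ X. (\<Prod>k\<in>K. f k (X k)) \<partial>PiM I M) = (\<integral>\<^sup>+ X. (\<Prod>k\<in>K. f k (restrict X K k)) \<partial>PiM I M)"
    by (intro nn_integral_cong prod.cong) auto
  also have "\<dots> = (\<integral>\<^sup>+ Y. (\<Prod>k\<in>K. f k (Y k)) \<partial>distr (PiM I M) (PiM K M) (\<lambda>X. restrict X K))"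
    using K f by (intro nn_integral_distr[symmetric] measurable_restrict_subset borel_measurable_prod_ennreal
        measurable_compose[OF measurable_component_singleton]) auto
  also have "\<dots> = (\<integral>\<^sup>+ Y. (\<Prod>k\<in>K. f k (Y k)) \<partial>PiM K M)"
    using K by (simp add: distr_PiM_restrict_finite)
  also have "\<dots> = (\<Prod>k\<in>K. \<integral>\<^sup>+ x. f k x \<partial>M k)"
    using K f by (intro product_nn_integral_prod) auto
  finally show ?thesis .
qed

lemma (in product_prob_space) emeasure_density_PiM_prod_emb:
  assumes C: "finite C" "C \<subseteq> I" and f: "\<And>k. k \<in> C \<Longrightarrow> f k \<in> borel_measurable (M k)"
    and J: "finite J" "J \<subseteq> I" and F: "\<And>k. k \<in> J \<Longrightarrow> F k \<in> sets (M k)"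
  shows "emeasure (density (PiM I M) (\<lambda>X. \<Prod>k\<in>C. f k (X k))) (prod_emb I M J (Pi\<^sub>E J F))
    = (\<Prod>k\<in>J \<union> C. emeasure (if k \<in> C then density (M k) (f k) else M k)
        (if k \<in> J then F k else space (M k)))"
    (is "emeasure (density _ ?L) ?A = _")
proof -
  define G where "G k = (if k \<in> J then F k else space (M k))" for k
  define g where "g k = (\<lambda>x. (if k \<in> C then f k x else 1) * indicator (G k) x)" for k
  have G: "G k \<in> sets (M k)" for k
    using F by (simp add: G_def)
  have g_meas: "g k \<in> borel_measurable (M k)" if "k \<in> J \<union> C" for k
    using that f G[of k] borel_measurable_indicator[OF G[of k]]
    by (cases "k \<in> C") (auto simp: g_def intro: borel_measurable_times_ennreal)
  have L_meas: "?L \<in> borel_measurable (PiM I M)"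
    using C f by (intro borel_measurable_prod_ennreal measurable_compose[OF measurable_component_singleton]) auto
  have "?L X * indicator ?A X = (\<Prod>k\<in>J \<union> C. g k (X k))" if "X \<in> space (PiM I M)" for X
  proof -
    have "indicator ?A X = (\<Prod>k\<in>J. indicator (F k) (X k) :: ennreal)"
      using that by (rule indicator_prod_emb_PiE[OF J])
    also have "\<dots> = (\<Prod>k\<in>J \<union> C. indicator (G k) (X k))"
      using J C that by (intro prod.mono_neutral_cong_left) (auto simp: G_def space_PiM PiE_iff)
    finally show ?thesis
      using J C by (simp add: g_def prod.distrib prod.If_cases Int_absorb1)
  qed
  then have "emeasure (density (PiM I M) ?L) ?A = (\<integral>\<^sup>+ X. (\<Prod>k\<in>J \<union> C. g k (X k)) \<partial>PiM I M)"
    using J F L_meas by (simp add: emeasure_density sets_PiM_I cong: nn_integral_cong)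
  also have "\<dots> = (\<Prod>k\<in>J \<union> C. \<integral>\<^sup>+ x. g k x \<partial>M k)"
    using J C g_meas by (intro nn_integral_PiM_prod) auto
  also have "\<dots> = (\<Prod>k\<in>J \<union> C. emeasure (if k \<in> C then density (M k) (f k) else M k) (G k))"
    using f G by (intro prod.cong) (auto simp: g_def emeasure_density)
  finally show ?thesis
    by (simp add: G_def)
qed

lemma (in product_prob_space) density_PiM_prod:
  assumes C: "finite C" "C \<subseteq> I" and f: "\<And>k. k \<in> C \<Longrightarrow> f k \<in> borel_measurable (M k)"
    and prob: "\<And>k. k \<in> C \<Longrightarrow> prob_space (density (M k) (f k))"
  shows "density (PiM I M) (\<lambda>X. \<Prod>k\<in>C. f k (X k)) = PiM I (\<lambda>k. if k \<in> C then density (M k) (f k) else M k)"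
    (is "_ = PiM I ?N")
proof -
  interpret N: product_prob_space ?N I
    using prob by (intro product_prob_spaceI) (simp add: M.prob_space_axioms)
  have sets_N: "sets (?N k) = sets (M k)" and space_N: "space (?N k) = space (M k)" for k
    by simp_all
  show ?thesis
  proof (rule N.PiM_eq)
    show "sets (density (PiM I M) (\<lambda>X. \<Prod>k\<in>C. f k (X k))) = sets (PiM I ?N)"
      using sets_N by (simp cong: sets_PiM_cong)
  next
    fix J F
    assume J: "finite J" "J \<subseteq> I" and F: "\<And>j. j \<in> J \<Longrightarrow> F j \<in> sets (?N j)"
    have "prod_emb I ?N J (Pi\<^sub>E J F) = prod_emb I M J (Pi\<^sub>E J F)"
      by (simp add: prod_emb_def space_N)
    then show "emeasure (density (PiM I M) (\<lambda>X. \<Prod>k\<in>C. f k (X k))) (prod_emb I ?N J (Pi\<^sub>E J F))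
        = (\<Prod>k\<in>J. emeasure (?N k) (F k))"
      using C f J F[unfolded sets_N] N.M.emeasure_space_1[unfolded space_N]
      by (simp add: emeasure_density_PiM_prod_emb) (intro prod.mono_neutral_cong_right, auto)
  qed
qed

section \<open>The Gaussian sample model\<close>

definition coord_dist :: "(nat \<Rightarrow> real) \<Rightarrow> nat \<times> nat \<Rightarrow> real measure" where
  "coord_dist \<theta> ji = density lborel (normal_density (\<theta> (snd ji)) 1)"

lemma prob_space_coord_dist: "prob_space (coord_dist \<theta> k)"
  unfolding coord_dist_def by (rule prob_space_normal_density) simp

lemma product_prob_space_coord_dist: "product_prob_space (coord_dist \<theta>)"
  by (intro product_prob_spaceI prob_space_coord_dist)

lemma sample_dist_eq_PiM: "sample_dist n \<theta> = PiM ({..<n} \<times> UNIV) (coord_dist \<theta>)"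
  unfolding sample_dist_def coord_dist_def ..

lemma prob_space_sample_dist: "prob_space (sample_dist n \<theta>)"
  unfolding sample_dist_eq_PiM by (intro prob_space_PiM prob_space_coord_dist)

lemma sets_sample_dist_sample_space: "sets (sample_dist n \<theta>) = sets (sample_space n)"
  unfolding sample_dist_def sample_space_def by (intro sets_PiM_cong) auto

lemma measurable_sample_dist [simp]: "measurable (sample_dist n \<theta>) M = measurable (sample_space n) M"
  by (rule measurable_cong_sets[OF sets_sample_dist_sample_space refl])

lemma emeasure_sample_dist_space [simp]: "emeasure (sample_dist n \<theta>) (space (sample_dist n \<theta>)) = 1"
  by (rule prob_space.emeasure_space_1[OF prob_space_sample_dist])

lemma measurable_sample_coord [measurable]:
  "j < n \<Longrightarrow> (\<lambda>X. X (j, i)) \<in> borel_measurable (sample_space n)"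
  unfolding sample_space_def using measurable_component_singleton[of "(j, i)" _ "\<lambda>_. lborel"] by simp

(* The likelihood ratio of N(b, 1) against N(a, 1) at x. *)
definition normal_tilt :: "real \<Rightarrow> real \<Rightarrow> real \<Rightarrow> real" where
  "normal_tilt a b x = exp ((b - a) * x - (b\<^sup>2 - a\<^sup>2) / 2)"

lemma normal_tilt_nonneg [simp]: "0 \<le> normal_tilt a b x"
  by (simp add: normal_tilt_def)

lemma measurable_normal_tilt [measurable]: "normal_tilt a b \<in> borel_measurable borel"
  unfolding normal_tilt_def by measurable

lemma normal_density_mult_tilt: "normal_density a 1 x * normal_tilt a b x = normal_density b 1 x"
proof -
  have "-(x - a)\<^sup>2 / 2 + ((b - a) * x - (b\<^sup>2 - a\<^sup>2) / 2) = -(x - b)\<^sup>2 / 2"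
    by (simp add: power2_eq_square field_simps)
  then show ?thesis
    unfolding normal_density_def normal_tilt_def by (simp flip: exp_add)
qed

lemma density_normal_tilt:
  "density (density lborel (normal_density a 1)) (\<lambda>x. ennreal (normal_tilt a b x))
     = density lborel (normal_density b 1)"
  by (subst density_density_eq)
    (auto simp: normal_density_nonneg normal_density_mult_tilt simp flip: ennreal_mult')

lemma nn_integral_normal_exp:
  "(\<integral>\<^sup>+ x. ennreal (exp (l * (x - a))) \<partial>density lborel (normal_density a 1)) = ennreal (exp (l\<^sup>2 / 2))"
proof -
  interpret prob_space "density lborel (normal_density (a + l) 1)"
    by (rule prob_space_normal_density) simp
  have "exp (l * (x - a)) = exp (l\<^sup>2 / 2) * normal_tilt a (a + l) x" for x
    by (simp add: normal_tilt_def exp_add[symmetric] power2_eq_square algebra_simps)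
  then have "(\<integral>\<^sup>+ x. ennreal (exp (l * (x - a))) \<partial>density lborel (normal_density a 1))
      = ennreal (exp (l\<^sup>2 / 2)) * (\<integral>\<^sup>+ x. ennreal (normal_tilt a (a + l) x) \<partial>density lborel (normal_density a 1))"
    by (subst nn_integral_cmult[symmetric]) (auto simp: ennreal_mult' intro!: nn_integral_cong)
  also have "(\<integral>\<^sup>+ x. ennreal (normal_tilt a (a + l) x) \<partial>density lborel (normal_density a 1))
      = (\<integral>\<^sup>+ x. 1 \<partial>density lborel (normal_density (a + l) 1))"
    by (subst density_normal_tilt[symmetric], subst nn_integral_density) auto
  also have "\<dots> = 1"
    using emeasure_space_1 by simp
  finally show ?thesis
    by simp
qed

definition col_sum :: "nat \<Rightarrow> nat \<Rightarrow> (nat \<times> nat \<Rightarrow> real) \<Rightarrow> real" where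
  "col_sum n i X = (\<Sum>j<n. X (j, i))"

lemma measurable_col_sum [measurable]: "col_sum n i \<in> borel_measurable (sample_space n)"
  unfolding col_sum_def by measurable

lemma prod_normal_tilt_col:
  "(\<Prod>j<n. normal_tilt a b (X (j, i))) = exp ((b - a) * col_sum n i X - real n * (b\<^sup>2 - a\<^sup>2) / 2)"
  by (simp add: normal_tilt_def col_sum_def sum_distrib_left sum_subtractf flip: exp_sum)

lemma nn_integral_exp_col_sum:
  "(\<integral>\<^sup>+ X. ennreal (exp (l * (col_sum n i X - real n * \<theta> i))) \<partial>sample_dist n \<theta>)
     = ennreal (exp (real n * l\<^sup>2 / 2))"
proof -
  interpret product_prob_space "coord_dist \<theta>" "{..<n} \<times> UNIV"
    by (rule product_prob_space_coord_dist)
  let ?K = "(\<lambda>j. (j, i)) ` {..<n}"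
  have inj: "inj_on (\<lambda>j. (j, i)) {..<n}"
    by (auto simp: inj_on_def)
  have "exp (l * (col_sum n i X - real n * \<theta> i)) = (\<Prod>j<n. exp (l * (X (j, i) - \<theta> i)))" for X
    by (simp add: col_sum_def sum_distrib_left sum_subtractf algebra_simps flip: exp_sum)
  then have "(\<integral>\<^sup>+ X. ennreal (exp (l * (col_sum n i X - real n * \<theta> i))) \<partial>sample_dist n \<theta>)
      = (\<integral>\<^sup>+ X. (\<Prod>k\<in>?K. ennreal (exp (l * (X k - \<theta> i)))) \<partial>PiM ({..<n} \<times> UNIV) (coord_dist \<theta>))"
    by (simp add: sample_dist_eq_PiM prod.reindex[OF inj] prod_ennreal)
  also have "\<dots> = (\<Prod>k\<in>?K. \<integral>\<^sup>+ x. ennreal (exp (l * (x - \<theta> i))) \<partial>coord_dist \<theta> k)"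
    by (intro nn_integral_PiM_prod) (auto simp: coord_dist_def)
  also have "\<dots> = ennreal (exp (l\<^sup>2 / 2)) ^ n"
    by (simp add: prod.reindex[OF inj] coord_dist_def nn_integral_normal_exp)
  also have "\<dots> = ennreal (exp (real n * l\<^sup>2 / 2))"
    by (simp add: ennreal_power exp_of_nat_mult[symmetric])
  finally show ?thesis .
qed

lemma sample_dist_fun_upd:
  "sample_dist n (\<theta>(i := b))
     = density (sample_dist n \<theta>) (\<lambda>X. \<Prod>j<n. ennreal (normal_tilt (\<theta> i) b (X (j, i))))"
proof -
  interpret product_prob_space "coord_dist \<theta>" "{..<n} \<times> UNIV"
    by (rule product_prob_space_coord_dist)
  let ?C = "(\<lambda>j. (j, i)) ` {..<n}" and ?f = "\<lambda>k x. ennreal (normal_tilt (\<theta> i) b x)"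
  have "density (sample_dist n \<theta>) (\<lambda>X. \<Prod>j<n. ennreal (normal_tilt (\<theta> i) b (X (j, i))))
      = density (PiM ({..<n} \<times> UNIV) (coord_dist \<theta>)) (\<lambda>X. \<Prod>k\<in>?C. ?f k (X k))"
    by (simp add: sample_dist_eq_PiM prod.reindex inj_on_def)
  also have "\<dots> = PiM ({..<n} \<times> UNIV) (\<lambda>k. if k \<in> ?C then density (coord_dist \<theta> k) (?f k) else coord_dist \<theta> k)"
    by (rule density_PiM_prod) (auto simp: coord_dist_def density_normal_tilt prob_space_normal_density)
  also have "\<dots> = sample_dist n (\<theta>(i := b))"
    unfolding sample_dist_eq_PiM by (intro PiM_cong) (auto simp: coord_dist_def density_normal_tilt)
  finally show ?thesis ..
qed

section \<open>Lower bound: Assouad's lemma\<close>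

lemma one_le_exp_neg_abs_add_exp_tails:
  fixes t :: real
  shows "1 \<le> exp 1 * exp (- \<bar>t\<bar>) + exp (-8) * exp (8 * t) + exp (-8) * exp (- 8 * t)"
proof (cases "\<bar>t\<bar> \<le> 1")
  case True
  then have "1 \<le> exp 1 * exp (- \<bar>t\<bar>)"
    by (simp add: mult_exp_exp)
  then show ?thesis
    by (smt (verit) exp_gt_zero mult_pos_pos)
next
  case False
  then have "1 \<le> exp (-8) * exp (8 * t) \<or> 1 \<le> exp (-8) * exp (- 8 * t)"
    by (cases "t \<ge> 0") (auto simp: mult_exp_exp)
  then show ?thesis
    by (smt (verit) exp_gt_zero mult_pos_pos)
qed

lemma one_le_mult_add_imp_ge:
  fixes Q :: ennreal
  assumes "1 \<le> ennreal a * Q + ennreal c" "a > 0" "0 \<le> c" "c \<le> 1 / 2"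
  shows "ennreal (1 / (2 * a)) \<le> Q"
proof (cases Q)
  case (real q)
  then have "ennreal 1 \<le> ennreal (a * q + c)"
    using assms by (simp add: ennreal_mult'[symmetric] ennreal_plus[symmetric] del: ennreal_plus)
  then have "1 \<le> a * q + c"
    using assms real by (subst (asm) ennreal_le_iff) auto
  then show ?thesis
    using assms real by (simp add: field_simps)
qed simp

(* The column sum is N(0, n) and n delta^2 is small, so |delta S| <= 1 except on a set that the
   Chernoff bound makes small. *)
lemma nn_integral_exp_neg_abs_col_sum_ge:
  assumes "\<theta> i = 0" and "real n * \<delta>\<^sup>2 \<le> 1 / 8"
  shows "ennreal (1 / (2 * exp 1)) \<le> (\<integral>\<^sup>+ X. ennreal (exp (- \<bar>\<delta> * col_sum n i X\<bar>)) \<partial>sample_dist n \<theta>)"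
    (is "_ \<le> ?Q")
proof -
  let ?S = "col_sum n i"
  define c where "c = exp (-8) * exp (32 * (real n * \<delta>\<^sup>2))"
  have mgf: "(\<integral>\<^sup>+ X. ennreal (exp (l * ?S X)) \<partial>sample_dist n \<theta>) = ennreal (exp (real n * l\<^sup>2 / 2))" for l
    using nn_integral_exp_col_sum[of n \<theta> l i] assms(1) by simp
  have c: "0 \<le> c" "c + c \<le> 1 / 2"
  proof -
    have "c \<le> exp (-4)"
      using assms(2) by (simp add: c_def mult_exp_exp)
    moreover have "exp (-4 :: real) \<le> 1 / 4"
      using exp_ge_add_one_self[of 4] by (simp add: exp_minus field_simps)
    ultimately show "0 \<le> c" "c + c \<le> 1 / 2"
      by (simp_all add: c_def)
  qed
  have "(1 :: ennreal) = (\<integral>\<^sup>+ X. 1 \<partial>sample_dist n \<theta>)"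
    by simp
  also have "\<dots> \<le> (\<integral>\<^sup>+ X. ennreal (exp 1) * ennreal (exp (- \<bar>\<delta> * ?S X\<bar>))
      + ennreal (exp (-8)) * ennreal (exp ((8 * \<delta>) * ?S X))
      + ennreal (exp (-8)) * ennreal (exp ((- 8 * \<delta>) * ?S X)) \<partial>sample_dist n \<theta>)"
  proof (intro nn_integral_mono)
    fix X
    have "1 \<le> exp 1 * exp (- \<bar>\<delta> * ?S X\<bar>) + exp (-8) * exp ((8 * \<delta>) * ?S X)
        + exp (-8) * exp ((- 8 * \<delta>) * ?S X)"
      using one_le_exp_neg_abs_add_exp_tails[of "\<delta> * ?S X"] by (simp add: mult.assoc)
    then show "1 \<le> ennreal (exp 1) * ennreal (exp (- \<bar>\<delta> * ?S X\<bar>))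
      + ennreal (exp (-8)) * ennreal (exp ((8 * \<delta>) * ?S X))
      + ennreal (exp (-8)) * ennreal (exp ((- 8 * \<delta>) * ?S X))"
      by (simp add: ennreal_mult'[symmetric] ennreal_plus[symmetric] del: ennreal_plus)
  qed
  also have "\<dots> = ennreal (exp 1) * ?Q + ennreal c + ennreal c"
    using mgf[of "8 * \<delta>"] mgf[of "- 8 * \<delta>"]
    by (simp add: nn_integral_add nn_integral_cmult c_def ennreal_mult')
  also have "\<dots> = ennreal (exp 1) * ?Q + ennreal (c + c)"
    using c(1) by (subst ennreal_plus) (auto simp: c_def add.assoc)
  finally have "1 \<le> ennreal (exp 1) * ?Q + ennreal (c + c)" .
  then show ?thesis
    by (rule one_le_mult_add_imp_ge) (use c in auto)
qed

lemma two_point_weighted_sq_ge: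
  fixes \<delta> s y c :: real
  shows "2 * \<delta>\<^sup>2 * exp (- c) * exp (- \<bar>\<delta> * s\<bar>)
      \<le> exp (\<delta> * s - c) * (y - \<delta>)\<^sup>2 + exp (- \<delta> * s - c) * (y + \<delta>)\<^sup>2"
proof -
  have "(y - \<delta>)\<^sup>2 + (y + \<delta>)\<^sup>2 = 2 * \<delta>\<^sup>2 + 2 * y\<^sup>2"
    by (simp add: power2_eq_square algebra_simps)
  then have "2 * \<delta>\<^sup>2 * exp (- \<bar>\<delta> * s\<bar>) \<le> exp (- \<bar>\<delta> * s\<bar>) * ((y - \<delta>)\<^sup>2 + (y + \<delta>)\<^sup>2)"
    by simp
  also have "\<dots> \<le> exp (\<delta> * s) * (y - \<delta>)\<^sup>2 + exp (- \<delta> * s) * (y + \<delta>)\<^sup>2"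
    unfolding distrib_left by (intro add_mono mult_right_mono) (auto simp: abs_if)
  finally have "exp (- c) * (2 * \<delta>\<^sup>2 * exp (- \<bar>\<delta> * s\<bar>))
      \<le> exp (- c) * (exp (\<delta> * s) * (y - \<delta>)\<^sup>2 + exp (- \<delta> * s) * (y + \<delta>)\<^sup>2)"
    by (rule mult_left_mono) simp
  moreover have "exp (\<delta> * s - c) = exp (- c) * exp (\<delta> * s)" "exp (- \<delta> * s - c) = exp (- c) * exp (- \<delta> * s)"
    by (simp_all add: mult_exp_exp)
  ultimately show ?thesis
    by (simp add: algebra_simps)
qed

lemma two_point_const_ge:
  fixes \<delta> :: real
  assumes "real n * \<delta>\<^sup>2 \<le> 1 / 8"
  shows "\<delta>\<^sup>2 / 16 \<le> 2 * \<delta>\<^sup>2 * exp (- (real n * \<delta>\<^sup>2 / 2)) * (1 / (2 * exp 1))"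
proof -
  have "exp 1 * exp (real n * \<delta>\<^sup>2 / 2) \<le> exp 1 * exp (1 :: real)"
    using assms by simp
  also have "\<dots> \<le> 3 * 3"
    using exp_le by (intro mult_mono) auto
  finally have "\<delta>\<^sup>2 / 16 \<le> \<delta>\<^sup>2 / (exp 1 * exp (real n * \<delta>\<^sup>2 / 2))"
    by (intro divide_left_mono) auto
  also have "\<dots> = 2 * \<delta>\<^sup>2 * exp (- (real n * \<delta>\<^sup>2 / 2)) * (1 / (2 * exp 1))"
    by (simp add: exp_minus field_simps)
  finally show ?thesis .
qed

lemma two_point_lower_bound:
  fixes g :: "(nat \<times> nat \<Rightarrow> real) \<Rightarrow> real"
  assumes g: "g \<in> borel_measurable (sample_space n)" and "\<theta> i = 0" and "real n * \<delta>\<^sup>2 \<le> 1 / 8"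
  shows "ennreal (\<delta>\<^sup>2 / 16) \<le> (\<integral>\<^sup>+ X. ennreal ((g X - \<delta>)\<^sup>2) \<partial>sample_dist n (\<theta>(i := \<delta>)))
      + (\<integral>\<^sup>+ X. ennreal ((g X + \<delta>)\<^sup>2) \<partial>sample_dist n (\<theta>(i := - \<delta>)))"
proof -
  let ?S = "col_sum n i" and ?c = "real n * \<delta>\<^sup>2 / 2"
  have lik: "sample_dist n (\<theta>(i := b))
      = density (sample_dist n \<theta>) (\<lambda>X. ennreal (exp (b * ?S X - real n * b\<^sup>2 / 2)))" for b
    using sample_dist_fun_upd[of n \<theta> i b] assms(2) by (simp add: prod_ennreal prod_normal_tilt_col)
  have "\<delta>\<^sup>2 / 16 \<le> 2 * \<delta>\<^sup>2 * exp (- ?c) * (1 / (2 * exp 1))"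
    using assms(3) by (rule two_point_const_ge)
  then have "ennreal (\<delta>\<^sup>2 / 16) \<le> ennreal (2 * \<delta>\<^sup>2 * exp (- ?c)) * ennreal (1 / (2 * exp 1))"
    by (simp add: ennreal_mult'[symmetric])
  also have "\<dots> \<le> ennreal (2 * \<delta>\<^sup>2 * exp (- ?c))
      * (\<integral>\<^sup>+ X. ennreal (exp (- \<bar>\<delta> * ?S X\<bar>)) \<partial>sample_dist n \<theta>)"
    using assms(2,3) by (intro mult_left_mono nn_integral_exp_neg_abs_col_sum_ge) auto
  also have "\<dots> = (\<integral>\<^sup>+ X. ennreal (2 * \<delta>\<^sup>2 * exp (- ?c) * exp (- \<bar>\<delta> * ?S X\<bar>)) \<partial>sample_dist n \<theta>)"
    by (simp add: nn_integral_cmult ennreal_mult')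
  also have "\<dots> \<le> (\<integral>\<^sup>+ X. ennreal (exp (\<delta> * ?S X - ?c)) * ennreal ((g X - \<delta>)\<^sup>2)
      + ennreal (exp (- \<delta> * ?S X - ?c)) * ennreal ((g X + \<delta>)\<^sup>2) \<partial>sample_dist n \<theta>)"
    using two_point_weighted_sq_ge
    by (intro nn_integral_mono) (simp add: ennreal_mult'[symmetric] ennreal_plus[symmetric] del: ennreal_plus)
  also have "\<dots> = (\<integral>\<^sup>+ X. ennreal ((g X - \<delta>)\<^sup>2) \<partial>sample_dist n (\<theta>(i := \<delta>)))
      + (\<integral>\<^sup>+ X. ennreal ((g X + \<delta>)\<^sup>2) \<partial>sample_dist n (\<theta>(i := - \<delta>)))"
    using g by (simp add: lik nn_integral_density nn_integral_add)
  finally show ?thesis .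
qed

lemma sum_Pow_insert:
  assumes "finite T" "i \<notin> T"
  shows "(\<Sum>A\<in>Pow (insert i T). f A) = (\<Sum>B\<in>Pow T. f (insert i B) + f B)"
proof -
  have inj: "inj_on (insert i) (Pow T)"
    using assms(2) by (intro inj_onI) (metis Diff_insert_absorb PowD subsetD)
  have "(\<Sum>A\<in>Pow (insert i T). f A) = (\<Sum>A\<in>Pow T. f A) + (\<Sum>A\<in>insert i ` Pow T. f A)"
    unfolding Pow_insert using assms by (intro sum.union_disjoint) auto
  then show ?thesis
    by (simp add: sum.reindex[OF inj] sum.distrib add.commute)
qed

lemma sum_coord_risk_le_risk:
  assumes "finite S" and est: "\<And>i. (\<lambda>X. est X i) \<in> borel_measurable (sample_space n)"
  shows "(\<Sum>i\<in>S. \<integral>\<^sup>+ X. ennreal ((est X i - \<theta> i)\<^sup>2) \<partial>sample_dist n \<theta>) \<le> risk n est \<theta>"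
proof -
  have [measurable]: "(\<lambda>X. est X i) \<in> borel_measurable (sample_dist n \<theta>)" for i
    using est by simp
  have "(\<Sum>i\<in>S. \<integral>\<^sup>+ X. ennreal ((est X i - \<theta> i)\<^sup>2) \<partial>sample_dist n \<theta>)
      = (\<integral>\<^sup>+ X. (\<Sum>i\<in>S. ennreal ((est X i - \<theta> i)\<^sup>2)) \<partial>sample_dist n \<theta>)"
    by (intro nn_integral_sum[symmetric]) measurable
  also have "\<dots> \<le> risk n est \<theta>"
    unfolding risk_def using assms(1) by (intro nn_integral_mono sum_le_suminf summableI) auto
  finally show ?thesis .
qed

definition hypercube_vertex :: "nat \<Rightarrow> real \<Rightarrow> nat set \<Rightarrow> nat \<Rightarrow> real" where
  "hypercube_vertex d \<delta> A i = (if i \<in> {d..<2 * d} then if i \<in> A then \<delta> else - \<delta> else 0)"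

lemma hypercube_vertex_in_Gamma_weighted:
  assumes "d \<ge> 1"
  shows "hypercube_vertex d (1 / (2 * real d ^ 2)) A \<in> Gamma_weighted"
proof -
  let ?\<delta> = "1 / (2 * real d ^ 2)"
  let ?f = "\<lambda>i. real (i + 1) * \<bar>hypercube_vertex d ?\<delta> A i\<bar>"
  have outside: "?f i = 0" if "i \<notin> {d..<2 * d}" for i
    using that by (simp add: hypercube_vertex_def)
  have "(\<Sum>i. ?f i) = (\<Sum>i\<in>{d..<2 * d}. ?f i)"
    using outside by (intro suminf_finite) auto
  also have "\<dots> = (\<Sum>i\<in>{d..<2 * d}. real (i + 1) * ?\<delta>)"
    by (intro sum.cong) (auto simp: hypercube_vertex_def)
  also have "\<dots> \<le> (\<Sum>i\<in>{d..<2 * d}. real (2 * d) * ?\<delta>)"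
    by (intro sum_mono mult_right_mono) auto
  also have "\<dots> = 1"
    using assms by (simp add: power2_eq_square)
  finally show ?thesis
    unfolding Gamma_weighted_def using summable_finite[of "{d..<2 * d}" ?f] outside by auto
qed

lemma hypercube_coord_risk_ge:
  assumes g: "g \<in> borel_measurable (sample_space n)" and i: "i \<in> {d..<2 * d}"
    and "real n * \<delta>\<^sup>2 \<le> 1 / 8"
  shows "ennreal (2 ^ (d - 1) * (\<delta>\<^sup>2 / 16)) \<le> (\<Sum>A\<in>Pow {d..<2 * d}.
      \<integral>\<^sup>+ X. ennreal ((g X - hypercube_vertex d \<delta> A i)\<^sup>2) \<partial>sample_dist n (hypercube_vertex d \<delta> A))"
proof -
  define h where "h A = (\<integral>\<^sup>+ X. ennreal ((g X - hypercube_vertex d \<delta> A i)\<^sup>2)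
      \<partial>sample_dist n (hypercube_vertex d \<delta> A))" for A
  define T where "T = {d..<2 * d} - {i}"
  have T: "{d..<2 * d} = insert i T" "i \<notin> T" "finite T" "card T = d - 1"
    using i by (auto simp: T_def)
  have pair: "ennreal (\<delta>\<^sup>2 / 16) \<le> h (insert i B) + h B" if "B \<subseteq> T" for B
  proof -
    define \<theta> where "\<theta> = (hypercube_vertex d \<delta> B)(i := 0)"
    have \<theta>_i: "\<theta> i = 0"
      by (simp add: \<theta>_def)
    have vertices: "hypercube_vertex d \<delta> (insert i B) = \<theta>(i := \<delta>)" "hypercube_vertex d \<delta> B = \<theta>(i := - \<delta>)"
      using i that T(2) by (auto simp: \<theta>_def hypercube_vertex_def fun_eq_iff)
    show ?thesis
      unfolding h_def vertices using two_point_lower_bound[where \<theta>=\<theta> and i=i, OF g \<theta>_i assms(3)] by simp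
  qed
  have "ennreal (2 ^ (d - 1) * (\<delta>\<^sup>2 / 16)) = (\<Sum>B\<in>Pow T. ennreal (\<delta>\<^sup>2 / 16))"
    using T ennreal_mult[of "2 ^ (d - 1)" "\<delta>\<^sup>2 / 16"] ennreal_power[of 2 "d - 1"] by (simp add: card_Pow)
  also have "\<dots> \<le> (\<Sum>B\<in>Pow T. h (insert i B) + h B)"
    using pair by (intro sum_mono) auto
  also have "\<dots> = (\<Sum>A\<in>Pow {d..<2 * d}. h A)"
    unfolding T(1) using T(3,2) by (rule sum_Pow_insert[symmetric])
  finally show ?thesis
    by (simp add: h_def)
qed

lemma sum_hypercube_risk_ge:
  assumes est: "\<And>i. (\<lambda>X. est X i) \<in> borel_measurable (sample_space n)"
    and "real n * \<delta>\<^sup>2 \<le> 1 / 8"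
  shows "ennreal (real d * (2 ^ (d - 1) * (\<delta>\<^sup>2 / 16)))
    \<le> (\<Sum>A\<in>Pow {d..<2 * d}. risk n est (hypercube_vertex d \<delta> A))"
proof -
  define S where "S = {d..<2 * d}"
  define h where "h i A = (\<integral>\<^sup>+ X. ennreal ((est X i - hypercube_vertex d \<delta> A i)\<^sup>2)
      \<partial>sample_dist n (hypercube_vertex d \<delta> A))" for i A
  have S: "finite S" "card S = d"
    by (simp_all add: S_def)
  have "ennreal (real d * (2 ^ (d - 1) * (\<delta>\<^sup>2 / 16))) = (\<Sum>i\<in>S. ennreal (2 ^ (d - 1) * (\<delta>\<^sup>2 / 16)))"
    using S ennreal_mult[of "real d" "2 ^ (d - 1) * (\<delta>\<^sup>2 / 16)"] by (simp add: ennreal_of_nat_eq_real_of_nat)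
  also have "\<dots> \<le> (\<Sum>i\<in>S. \<Sum>A\<in>Pow S. h i A)"
    unfolding S_def h_def using est assms(2) by (intro sum_mono hypercube_coord_risk_ge)
  also have "\<dots> = (\<Sum>A\<in>Pow S. \<Sum>i\<in>S. h i A)"
    by (rule sum.swap)
  also have "\<dots> \<le> (\<Sum>A\<in>Pow S. risk n est (hypercube_vertex d \<delta> A))"
    unfolding h_def using S est by (intro sum_mono sum_coord_risk_le_risk)
  finally show ?thesis
    by (simp add: S_def)
qed

lemma achievable_imp_eps_sq_ge:
  assumes "achievable Gamma_weighted \<epsilon> n" and d: "d \<ge> 1" and "2 * real n \<le> real d ^ 4"
  shows "1 / (128 * real d ^ 3) \<le> \<epsilon>\<^sup>2"
proof -
  obtain est where est: "\<And>i. (\<lambda>X. est X i) \<in> borel_measurable (sample_space n)"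
    and risk: "\<And>\<theta>. \<theta> \<in> Gamma_weighted \<Longrightarrow> risk n est \<theta> \<le> ennreal (\<epsilon>\<^sup>2)"
    using assms(1) unfolding achievable_def by blast
  define \<delta> where "\<delta> = 1 / (2 * real d ^ 2)"
  have "real n * \<delta>\<^sup>2 = real n / (4 * real d ^ 4)"
    by (simp add: \<delta>_def power2_eq_square field_simps eval_nat_numeral)
  then have n\<delta>: "real n * \<delta>\<^sup>2 \<le> 1 / 8"
    using assms(3) d by (simp add: pos_divide_le_eq)
  have "ennreal (real d * (2 ^ (d - 1) * (\<delta>\<^sup>2 / 16)))
      \<le> (\<Sum>A\<in>Pow {d..<2 * d}. risk n est (hypercube_vertex d \<delta> A))"
    using est n\<delta> by (rule sum_hypercube_risk_ge)
  also have "\<dots> \<le> (\<Sum>A\<in>Pow {d..<2 * d}. ennreal (\<epsilon>\<^sup>2))"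
    using hypercube_vertex_in_Gamma_weighted[OF d] by (intro sum_mono risk) (simp add: \<delta>_def)
  also have "\<dots> = ennreal (2 ^ d * \<epsilon>\<^sup>2)"
    by (simp add: card_Pow ennreal_mult' ennreal_power ennreal_of_nat_eq_real_of_nat)
  finally have "real d * (2 ^ (d - 1) * (\<delta>\<^sup>2 / 16)) \<le> 2 ^ d * \<epsilon>\<^sup>2"
    by (subst (asm) ennreal_le_iff) auto
  moreover have "(2 :: real) ^ d = 2 * 2 ^ (d - 1)"
    using d by (cases d) auto
  moreover have "real d * (\<delta>\<^sup>2 / 32) = 1 / (128 * real d ^ 3)"
    using d by (simp add: \<delta>_def power2_eq_square field_simps eval_nat_numeral)
  ultimately show ?thesis
    by simp
qed

section \<open>Upper bound: hard thresholding\<close>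

definition hard_threshold :: "real \<Rightarrow> real \<Rightarrow> real" where
  "hard_threshold \<tau> y = (if \<tau> < \<bar>y\<bar> then y else 0)"

lemma hard_threshold_sq_error_le:
  assumes "\<tau> > 0"
  shows "(hard_threshold \<tau> (t + w) - t)\<^sup>2 \<le> (if \<bar>t\<bar> < 2 * \<tau> then t\<^sup>2 else 0)
      + (if \<tau> / 2 < \<bar>t\<bar> then 4 * w\<^sup>2 else 0) + (if \<tau> / 2 < \<bar>w\<bar> then w\<^sup>2 else 0)"
proof (cases "\<tau> < \<bar>t + w\<bar>")
  case True
  then have "\<tau> / 2 < \<bar>t\<bar> \<or> \<tau> / 2 < \<bar>w\<bar>"
    by linarith
  then show ?thesis
    using True by (auto simp: hard_threshold_def)
next
  case False
  show ?thesis
  proof (cases "\<bar>t\<bar> < 2 * \<tau>")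
    case True
    then show ?thesis
      using False by (simp add: hard_threshold_def)
  next
    case big: False
    then have "\<bar>t\<bar>\<^sup>2 \<le> (2 * \<bar>w\<bar>)\<^sup>2"
      using False by (intro power_mono) auto
    then have "t\<^sup>2 \<le> 4 * w\<^sup>2"
      by (simp add: power_mult_distrib)
    then show ?thesis
      using False big assms by (simp add: hard_threshold_def) (smt (verit) zero_le_power2)
  qed
qed

lemma sq_le_two_exp:
  fixes x :: real
  assumes "0 \<le> x"
  shows "x\<^sup>2 \<le> 2 * exp x"
  using exp_lower_Taylor_quadratic[OF assms] assms by simp

lemma sq_le_exp_add_exp_neg:
  fixes x :: real
  shows "x\<^sup>2 \<le> 2 * (exp x + exp (- x))"
  using sq_le_two_exp[of "\<bar>x\<bar>"] by (cases "x \<ge> 0") (auto simp: add_increasing2 add_increasing)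

lemma tail_sq_le_exp:
  fixes \<mu> s w :: real
  assumes "\<mu> > 0"
  shows "(if s < \<bar>w\<bar> then w\<^sup>2 else 0) \<le> 2 / \<mu>\<^sup>2 * exp (- \<mu> * s) * (exp (2 * \<mu> * w) + exp (- 2 * \<mu> * w))"
proof (cases "s < \<bar>w\<bar>")
  case True
  have "w\<^sup>2 = (\<mu> * \<bar>w\<bar>)\<^sup>2 / \<mu>\<^sup>2"
    using assms by (simp add: power_mult_distrib)
  also have "\<dots> \<le> 2 / \<mu>\<^sup>2 * exp (\<mu> * \<bar>w\<bar>)"
    using sq_le_two_exp[of "\<mu> * \<bar>w\<bar>"] assms by (simp add: divide_right_mono)
  also have "\<dots> \<le> 2 / \<mu>\<^sup>2 * exp (\<mu> * \<bar>w\<bar>) * exp (\<mu> * \<bar>w\<bar> - \<mu> * s)"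
  proof -
    have "1 \<le> exp (\<mu> * \<bar>w\<bar> - \<mu> * s)"
      using True assms by simp
    from mult_left_mono[OF this, of "2 / \<mu>\<^sup>2 * exp (\<mu> * \<bar>w\<bar>)"] show ?thesis
      by simp
  qed
  also have "\<dots> = 2 / \<mu>\<^sup>2 * exp (- \<mu> * s) * exp (2 * \<mu> * \<bar>w\<bar>)"
    by (simp add: mult.assoc mult_exp_exp)
  also have "\<dots> \<le> 2 / \<mu>\<^sup>2 * exp (- \<mu> * s) * (exp (2 * \<mu> * w) + exp (- 2 * \<mu> * w))"
    by (intro mult_left_mono) (auto simp: abs_if)
  finally show ?thesis
    using True by simp
qed (use assms in simp)

lemma threshold_sq_error_le_exp:
  fixes m \<tau> \<mu> t v :: real
  assumes "m > 0" "\<tau> > 0" "\<mu> > 0"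
  shows "(hard_threshold \<tau> (t + v / m) - t)\<^sup>2 \<le> (if \<bar>t\<bar> < 2 * \<tau> then t\<^sup>2 else 0)
      + (if \<tau> / 2 < \<bar>t\<bar> then 8 / m else 0) * (exp (v / sqrt m) + exp (- (v / sqrt m)))
      + 2 / \<mu>\<^sup>2 * exp (- \<mu> * (\<tau> / 2)) * (exp (2 * \<mu> / m * v) + exp (- (2 * \<mu> / m * v)))"
proof -
  define w where "w = v / m"
  have "m * w\<^sup>2 = (v / sqrt m)\<^sup>2"
    using assms(1) by (simp add: w_def power_divide power2_eq_square)
  also have "\<dots> \<le> 2 * (exp (v / sqrt m) + exp (- (v / sqrt m)))"
    by (rule sq_le_exp_add_exp_neg)
  finally have "4 * w\<^sup>2 \<le> 8 / m * (exp (v / sqrt m) + exp (- (v / sqrt m)))"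
    using assms(1) by (simp add: field_simps)
  then have "(if \<tau> / 2 < \<bar>t\<bar> then 4 * w\<^sup>2 else 0)
      \<le> (if \<tau> / 2 < \<bar>t\<bar> then 8 / m else 0) * (exp (v / sqrt m) + exp (- (v / sqrt m)))"
    by simp
  moreover have "(if \<tau> / 2 < \<bar>w\<bar> then w\<^sup>2 else 0)
      \<le> 2 / \<mu>\<^sup>2 * exp (- \<mu> * (\<tau> / 2)) * (exp (2 * \<mu> / m * v) + exp (- (2 * \<mu> / m * v)))"
    using tail_sq_le_exp[OF assms(3), of "\<tau> / 2" w] by (simp add: w_def)
  ultimately show ?thesis
    using hard_threshold_sq_error_le[OF assms(2), of t w] by (simp add: w_def)
qed

lemma nn_integral_exp_moments_col_sum:
  fixes a b c :: real and \<theta> :: "nat \<Rightarrow> real" and n i :: nat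
  defines "v \<equiv> \<lambda>X. col_sum n i X - real n * \<theta> i"
  assumes "0 \<le> a" "0 \<le> b" "0 \<le> c"
  shows "(\<integral>\<^sup>+ X. ennreal (a + b * (exp (l * v X) + exp (- l * v X)) + c * (exp (k * v X) + exp (- k * v X)))
      \<partial>sample_dist n \<theta>) = ennreal (a + b * (2 * exp (real n * l\<^sup>2 / 2)) + c * (2 * exp (real n * k\<^sup>2 / 2)))"
proof -
  have mgf: "(\<integral>\<^sup>+ X. ennreal (exp (t * v X)) \<partial>sample_dist n \<theta>) = ennreal (exp (real n * t\<^sup>2 / 2))" for t
    unfolding v_def by (rule nn_integral_exp_col_sum)
  have "(\<integral>\<^sup>+ X. ennreal (a + b * (exp (l * v X) + exp (- l * v X)) + c * (exp (k * v X) + exp (- k * v X)))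
      \<partial>sample_dist n \<theta>) = (\<integral>\<^sup>+ X. ennreal a + ennreal b * (ennreal (exp (l * v X)) + ennreal (exp (- l * v X)))
      + ennreal c * (ennreal (exp (k * v X)) + ennreal (exp (- k * v X))) \<partial>sample_dist n \<theta>)"
    using assms by (intro nn_integral_cong) (simp add: ennreal_plus ennreal_mult')
  also have "\<dots> = ennreal a + ennreal b * (ennreal (exp (real n * l\<^sup>2 / 2)) + ennreal (exp (real n * l\<^sup>2 / 2)))
      + ennreal c * (ennreal (exp (real n * k\<^sup>2 / 2)) + ennreal (exp (real n * k\<^sup>2 / 2)))"
    using mgf[of l] mgf[of "- l"] mgf[of k] mgf[of "- k"] by (simp add: nn_integral_add nn_integral_cmult v_def)
  also have "\<dots> = ennreal (a + b * (2 * exp (real n * l\<^sup>2 / 2)) + c * (2 * exp (real n * k\<^sup>2 / 2)))"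
    using assms by (simp add: ennreal_mult'[symmetric] ennreal_plus[symmetric] del: ennreal_plus)
  finally show ?thesis .
qed

lemma nn_integral_threshold_sq_error_le:
  assumes "n \<ge> 1" "\<tau> > 0" "\<mu> > 0"
  shows "(\<integral>\<^sup>+ X. ennreal ((hard_threshold \<tau> (col_sum n i X / real n) - \<theta> i)\<^sup>2) \<partial>sample_dist n \<theta>)
    \<le> ennreal ((if \<bar>\<theta> i\<bar> < 2 * \<tau> then (\<theta> i)\<^sup>2 else 0) + (if \<tau> / 2 < \<bar>\<theta> i\<bar> then 32 / real n else 0)
        + 4 / \<mu>\<^sup>2 * exp (2 * \<mu>\<^sup>2 / real n - \<mu> * (\<tau> / 2)))"
proof -
  define v where "v X = col_sum n i X - real n * \<theta> i" for X
  define A where "A = (if \<bar>\<theta> i\<bar> < 2 * \<tau> then (\<theta> i)\<^sup>2 else 0)"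
  define B where "B = (if \<tau> / 2 < \<bar>\<theta> i\<bar> then 8 / real n else 0)"
  define C where "C = 2 / \<mu>\<^sup>2 * exp (- \<mu> * (\<tau> / 2))"
  define l where "l = 1 / sqrt (real n)"
  define k where "k = 2 * \<mu> / real n"
  have n: "real n > 0"
    using assms(1) by simp
  have ABC: "0 \<le> A" "0 \<le> B" "0 \<le> C"
    by (auto simp: A_def B_def C_def)
  have "(\<integral>\<^sup>+ X. ennreal ((hard_threshold \<tau> (col_sum n i X / real n) - \<theta> i)\<^sup>2) \<partial>sample_dist n \<theta>)
      \<le> (\<integral>\<^sup>+ X. ennreal (A + B * (exp (l * v X) + exp (- l * v X)) + C * (exp (k * v X) + exp (- k * v X)))
          \<partial>sample_dist n \<theta>)"
  proof (intro nn_integral_mono ennreal_leI)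
    fix X
    have "col_sum n i X / real n = \<theta> i + v X / real n"
      using n by (simp add: v_def field_simps)
    then show "(hard_threshold \<tau> (col_sum n i X / real n) - \<theta> i)\<^sup>2
        \<le> A + B * (exp (l * v X) + exp (- l * v X)) + C * (exp (k * v X) + exp (- k * v X))"
      using threshold_sq_error_le_exp[OF n assms(2,3), of "\<theta> i" "v X"]
      by (simp add: A_def B_def C_def l_def k_def)
  qed
  also have "\<dots> = ennreal (A + B * (2 * exp (real n * l\<^sup>2 / 2)) + C * (2 * exp (real n * k\<^sup>2 / 2)))"
    unfolding v_def using ABC by (rule nn_integral_exp_moments_col_sum)
  also have "\<dots> \<le> ennreal ((if \<bar>\<theta> i\<bar> < 2 * \<tau> then (\<theta> i)\<^sup>2 else 0)
      + (if \<tau> / 2 < \<bar>\<theta> i\<bar> then 32 / real n else 0) + 4 / \<mu>\<^sup>2 * exp (2 * \<mu>\<^sup>2 / real n - \<mu> * (\<tau> / 2)))"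
  proof (intro ennreal_leI add_mono)
    have "real n * l\<^sup>2 / 2 = 1 / 2"
      using n by (simp add: l_def power_divide)
    then show "B * (2 * exp (real n * l\<^sup>2 / 2)) \<le> (if \<tau> / 2 < \<bar>\<theta> i\<bar> then 32 / real n else 0)"
      using exp_half_le2 n by (simp add: B_def divide_right_mono)
    have "real n * k\<^sup>2 / 2 = 2 * \<mu>\<^sup>2 / real n"
      using n by (simp add: k_def power_divide power2_eq_square)
    moreover have "exp (2 * \<mu>\<^sup>2 / real n - \<mu> * (\<tau> / 2)) = exp (- \<mu> * (\<tau> / 2)) * exp (2 * \<mu>\<^sup>2 / real n)"
      by (simp add: mult_exp_exp algebra_simps)
    ultimately show "C * (2 * exp (real n * k\<^sup>2 / 2)) \<le> 4 / \<mu>\<^sup>2 * exp (2 * \<mu>\<^sup>2 / real n - \<mu> * (\<tau> / 2))"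
      by (simp add: C_def)
  qed (simp add: A_def)
  finally show ?thesis .
qed

lemma threshold_error_terms_le_min:
  assumes "\<tau> > 0" and "64 / real n \<le> \<tau>\<^sup>2"
  shows "(if \<bar>t\<bar> < 2 * \<tau> then t\<^sup>2 else 0) + (if \<tau> / 2 < \<bar>t\<bar> then 32 / real n else 0)
      \<le> 5 * min (\<tau>\<^sup>2) (\<tau> * \<bar>t\<bar>)"
proof -
  let ?a = "if \<bar>t\<bar> < 2 * \<tau> then t\<^sup>2 else 0" and ?b = "if \<tau> / 2 < \<bar>t\<bar> then 32 / real n else 0"
  have "?a \<le> 4 * \<tau>\<^sup>2"
  proof (cases "\<bar>t\<bar> < 2 * \<tau>")
    case True
    then have "\<bar>t\<bar>\<^sup>2 \<le> (2 * \<tau>)\<^sup>2"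
      by (intro power_mono) auto
    then show ?thesis
      using True by (simp add: power_mult_distrib)
  qed simp
  moreover have "?a \<le> 2 * (\<tau> * \<bar>t\<bar>)"
  proof (cases "\<bar>t\<bar> < 2 * \<tau>")
    case True
    then have "\<bar>t\<bar> * \<bar>t\<bar> \<le> (2 * \<tau>) * \<bar>t\<bar>"
      by (intro mult_right_mono) auto
    then show ?thesis
      using True by (simp add: power2_eq_square)
  qed (use assms(1) in simp)
  moreover have "?b \<le> \<tau>\<^sup>2 / 2"
    using assms by auto
  moreover have "?b \<le> \<tau> * \<bar>t\<bar>"
  proof (cases "\<tau> / 2 < \<bar>t\<bar>")
    case True
    then have "\<tau>\<^sup>2 / 2 \<le> \<tau> * \<bar>t\<bar>"
      using assms(1) by (simp add: power2_eq_square)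
    then show ?thesis
      using True assms(2) by simp
  qed (use assms(1) in simp)
  moreover have "\<And>a b x y :: real. a \<le> 4 * x \<Longrightarrow> a \<le> 2 * y \<Longrightarrow> b \<le> x / 2 \<Longrightarrow> b \<le> y \<Longrightarrow> 0 \<le> x
      \<Longrightarrow> 0 \<le> y \<Longrightarrow> a + b \<le> 5 * min x y"
    by (auto simp: min_def)
  ultimately show ?thesis
    using assms(1) by simp
qed

lemma Gamma_weighted_coord_le:
  assumes "\<theta> \<in> Gamma_weighted"
  shows "real (i + 1) * \<bar>\<theta> i\<bar> \<le> 1"
proof -
  have "summable (\<lambda>i. real (i + 1) * \<bar>\<theta> i\<bar>)" "(\<Sum>i. real (i + 1) * \<bar>\<theta> i\<bar>) \<le> 1"
    using assms by (auto simp: Gamma_weighted_def)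
  moreover from this(1) have "(\<Sum>j\<in>{i}. real (j + 1) * \<bar>\<theta> j\<bar>) \<le> (\<Sum>j. real (j + 1) * \<bar>\<theta> j\<bar>)"
    by (rule sum_le_suminf) auto
  ultimately show ?thesis
    by simp
qed

lemma min_sq_mult_abs_le:
  fixes \<tau> t :: real
  assumes "0 \<le> \<tau>"
  shows "min (\<tau>\<^sup>2) (\<tau> * \<bar>t\<bar>) \<le> (if i < d then \<tau>\<^sup>2 else 0) + \<tau> / real (d + 1) * (real (i + 1) * \<bar>t\<bar>)"
proof (cases "i < d")
  case False
  then have "\<tau> * \<bar>t\<bar> \<le> \<tau> / real (d + 1) * (real (i + 1) * \<bar>t\<bar>)"
    using assms by (simp add: field_simps mult_left_mono mult_right_mono)
  then show ?thesis
    using False by simp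
next
  case True
  have "0 \<le> \<tau> / real (d + 1) * (real (i + 1) * \<bar>t\<bar>)"
    using assms by simp
  then show ?thesis
    using True min.cobounded1[of "\<tau>\<^sup>2" "\<tau> * \<bar>t\<bar>"] by simp
qed

lemma suminf_min_le_Gamma_weighted:
  assumes "\<theta> \<in> Gamma_weighted" and "\<tau> \<ge> 0"
  shows "summable (\<lambda>i. min (\<tau>\<^sup>2) (\<tau> * \<bar>\<theta> i\<bar>))"
    and "(\<Sum>i. min (\<tau>\<^sup>2) (\<tau> * \<bar>\<theta> i\<bar>)) \<le> real d * \<tau>\<^sup>2 + \<tau> / real (d + 1)"
proof -
  define g where "g i = (if i < d then \<tau>\<^sup>2 else 0) + \<tau> / real (d + 1) * (real (i + 1) * \<bar>\<theta> i\<bar>)" for i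
  have s: "summable (\<lambda>i. real (i + 1) * \<bar>\<theta> i\<bar>)" and le1: "(\<Sum>i. real (i + 1) * \<bar>\<theta> i\<bar>) \<le> 1"
    using assms(1) by (auto simp: Gamma_weighted_def)
  have g: "summable g" "(\<Sum>i. g i) = real d * \<tau>\<^sup>2 + \<tau> / real (d + 1) * (\<Sum>i. real (i + 1) * \<bar>\<theta> i\<bar>)"
  proof -
    have fin: "summable (\<lambda>i. if i < d then \<tau>\<^sup>2 else 0)" "(\<Sum>i. if i < d then \<tau>\<^sup>2 else 0) = real d * \<tau>\<^sup>2"
      by (rule summable_finite[of "{..<d}"], simp_all) (subst suminf_finite[of "{..<d}"], auto)
    show "summable g"
      unfolding g_def using fin s by (intro summable_add summable_mult)
    have "(\<Sum>i. g i) = (\<Sum>i. if i < d then \<tau>\<^sup>2 else 0) + (\<Sum>i. \<tau> / real (d + 1) * (real (i + 1) * \<bar>\<theta> i\<bar>))"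
      unfolding g_def using fin s by (intro suminf_add[symmetric] summable_mult)
    then show "(\<Sum>i. g i) = real d * \<tau>\<^sup>2 + \<tau> / real (d + 1) * (\<Sum>i. real (i + 1) * \<bar>\<theta> i\<bar>)"
      by (simp only: fin(2) suminf_mult[OF s])
  qed
  have min_le: "min (\<tau>\<^sup>2) (\<tau> * \<bar>\<theta> i\<bar>) \<le> g i" for i
    unfolding g_def using assms(2) by (rule min_sq_mult_abs_le)
  show sm: "summable (\<lambda>i. min (\<tau>\<^sup>2) (\<tau> * \<bar>\<theta> i\<bar>))"
  proof (rule summable_comparison_test'[OF g(1)])
    show "norm (min (\<tau>\<^sup>2) (\<tau> * \<bar>\<theta> i\<bar>)) \<le> g i" for i
      using min_le[of i] assms(2) by simp
  qed
  have "(\<Sum>i. min (\<tau>\<^sup>2) (\<tau> * \<bar>\<theta> i\<bar>)) \<le> (\<Sum>i. g i)"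
    using min_le sm g(1) by (rule suminf_le)
  also have "\<dots> \<le> real d * \<tau>\<^sup>2 + \<tau> / real (d + 1)"
  proof -
    have "\<tau> / real (d + 1) * (\<Sum>i. real (i + 1) * \<bar>\<theta> i\<bar>) \<le> \<tau> / real (d + 1) * 1"
      using le1 assms(2) by (intro mult_left_mono) auto
    then show ?thesis
      using g(2) by simp
  qed
  finally show "(\<Sum>i. min (\<tau>\<^sup>2) (\<tau> * \<bar>\<theta> i\<bar>)) \<le> real d * \<tau>\<^sup>2 + \<tau> / real (d + 1)" .
qed

(* Coordinates i >= n are estimated by 0: there |theta_i| <= 1/(i+1) is already below the threshold. *)
definition threshold_est :: "nat \<Rightarrow> real \<Rightarrow> (nat \<times> nat \<Rightarrow> real) \<Rightarrow> nat \<Rightarrow> real" where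
  "threshold_est n \<tau> X i = (if i < n then hard_threshold \<tau> (col_sum n i X / real n) else 0)"

lemma measurable_threshold_est [measurable]:
  "(\<lambda>X. threshold_est n \<tau> X i) \<in> borel_measurable (sample_space n)"
  unfolding threshold_est_def hard_threshold_def by measurable

lemma coord_risk_threshold_est_le:
  assumes "n \<ge> 1" "\<tau> > 0" "\<mu> > 0" "\<theta> \<in> Gamma_weighted"
    and "64 / real n \<le> \<tau>\<^sup>2" "1 / real (n + 1) \<le> \<tau>"
  shows "(\<integral>\<^sup>+ X. ennreal ((threshold_est n \<tau> X i - \<theta> i)\<^sup>2) \<partial>sample_dist n \<theta>)
    \<le> ennreal (5 * min (\<tau>\<^sup>2) (\<tau> * \<bar>\<theta> i\<bar>)
        + (if i < n then 4 / \<mu>\<^sup>2 * exp (2 * \<mu>\<^sup>2 / real n - \<mu> * (\<tau> / 2)) else 0))"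
proof (cases "i < n")
  case True
  then have "(\<integral>\<^sup>+ X. ennreal ((threshold_est n \<tau> X i - \<theta> i)\<^sup>2) \<partial>sample_dist n \<theta>)
    \<le> ennreal ((if \<bar>\<theta> i\<bar> < 2 * \<tau> then (\<theta> i)\<^sup>2 else 0) + (if \<tau> / 2 < \<bar>\<theta> i\<bar> then 32 / real n else 0)
        + 4 / \<mu>\<^sup>2 * exp (2 * \<mu>\<^sup>2 / real n - \<mu> * (\<tau> / 2)))"
    using nn_integral_threshold_sq_error_le[OF assms(1-3), where i=i and \<theta>=\<theta>]
    by (simp add: threshold_est_def)
  also have "\<dots> \<le> ennreal (5 * min (\<tau>\<^sup>2) (\<tau> * \<bar>\<theta> i\<bar>) + 4 / \<mu>\<^sup>2 * exp (2 * \<mu>\<^sup>2 / real n - \<mu> * (\<tau> / 2)))"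
    using threshold_error_terms_le_min[OF assms(2,5), of "\<theta> i"] by (intro ennreal_leI) simp
  finally show ?thesis
    using True by simp
next
  case False
  have "\<bar>\<theta> i\<bar> \<le> 1 / real (i + 1)"
    using Gamma_weighted_coord_le[OF assms(4), of i] by (simp add: field_simps)
  also have "\<dots> \<le> 1 / real (n + 1)"
    using False by (intro divide_left_mono) auto
  finally have "\<bar>\<theta> i\<bar> \<le> \<tau>"
    using assms(6) by simp
  have "\<bar>\<theta> i\<bar> * \<bar>\<theta> i\<bar> \<le> \<tau> * \<bar>\<theta> i\<bar>"
    using \<open>\<bar>\<theta> i\<bar> \<le> \<tau>\<close> by (rule mult_right_mono) simp
  then have sq: "(\<theta> i)\<^sup>2 \<le> \<tau> * \<bar>\<theta> i\<bar>"
    by (simp add: power2_eq_square)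
  moreover have "\<tau> * \<bar>\<theta> i\<bar> \<le> \<tau>\<^sup>2"
    using \<open>\<bar>\<theta> i\<bar> \<le> \<tau>\<close> assms(2) by (simp add: power2_eq_square)
  ultimately have "(\<theta> i)\<^sup>2 \<le> min (\<tau>\<^sup>2) (\<tau> * \<bar>\<theta> i\<bar>)"
    by (intro min.boundedI) auto
  then have "(\<theta> i)\<^sup>2 \<le> 5 * min (\<tau>\<^sup>2) (\<tau> * \<bar>\<theta> i\<bar>)"
    using zero_le_power2[of "\<theta> i"] by linarith
  then show ?thesis
    using False by (simp add: threshold_est_def ennreal_leI)
qed

lemma risk_threshold_est_le:
  assumes "n \<ge> 1" "\<tau> > 0" "\<mu> > 0" "\<theta> \<in> Gamma_weighted"
    and "64 / real n \<le> \<tau>\<^sup>2" "1 / real (n + 1) \<le> \<tau>"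
  shows "risk n (threshold_est n \<tau>) \<theta> \<le> ennreal (5 * (real d * \<tau>\<^sup>2 + \<tau> / real (d + 1))
      + real n * (4 / \<mu>\<^sup>2 * exp (2 * \<mu>\<^sup>2 / real n - \<mu> * (\<tau> / 2))))"
proof -
  define T where "T = 4 / \<mu>\<^sup>2 * exp (2 * \<mu>\<^sup>2 / real n - \<mu> * (\<tau> / 2))"
  define g where "g i = 5 * min (\<tau>\<^sup>2) (\<tau> * \<bar>\<theta> i\<bar>) + (if i < n then T else 0)" for i
  have min: "summable (\<lambda>i. min (\<tau>\<^sup>2) (\<tau> * \<bar>\<theta> i\<bar>))"
    "(\<Sum>i. min (\<tau>\<^sup>2) (\<tau> * \<bar>\<theta> i\<bar>)) \<le> real d * \<tau>\<^sup>2 + \<tau> / real (d + 1)"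
    using suminf_min_le_Gamma_weighted[OF assms(4)] assms(2) by auto
  have fin: "summable (\<lambda>i. if i < n then T else 0)" "(\<Sum>i. if i < n then T else 0) = real n * T"
    by (rule summable_finite[of "{..<n}"], simp_all) (subst suminf_finite[of "{..<n}"], auto)
  have g: "summable g" "(\<Sum>i. g i) = 5 * (\<Sum>i. min (\<tau>\<^sup>2) (\<tau> * \<bar>\<theta> i\<bar>)) + real n * T"
    unfolding g_def using min(1) fin by (simp_all add: summable_add summable_mult suminf_add[symmetric] suminf_mult)
  have g_nonneg: "0 \<le> g i" for i
    using assms(2) by (simp add: g_def T_def)
  have "risk n (threshold_est n \<tau>) \<theta> = (\<Sum>i. \<integral>\<^sup>+ X. ennreal ((threshold_est n \<tau> X i - \<theta> i)\<^sup>2) \<partial>sample_dist n \<theta>)"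
    unfolding risk_def by (rule nn_integral_suminf) simp
  also have "\<dots> \<le> (\<Sum>i. ennreal (g i))"
    unfolding g_def T_def using coord_risk_threshold_est_le[OF assms] by (intro suminf_le summableI)
  also have "\<dots> = ennreal (\<Sum>i. g i)"
    using g_nonneg g(1) by (rule suminf_ennreal2)
  also have "\<dots> \<le> ennreal (5 * (real d * \<tau>\<^sup>2 + \<tau> / real (d + 1)) + real n * T)"
    using g(2) min(2) by (intro ennreal_leI) simp
  finally show ?thesis
    by (simp add: T_def)
qed

lemma threshold_tail_term_eq:
  assumes "n \<ge> 2"
  defines "\<mu> \<equiv> real n * sqrt (ln (real n) / real n)" and "\<tau> \<equiv> 8 * sqrt (ln (real n) / real n)"
  shows "real n * (4 / \<mu>\<^sup>2 * exp (2 * \<mu>\<^sup>2 / real n - \<mu> * (\<tau> / 2))) = 4 / (real n ^ 2 * ln (real n))"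
proof -
  have n: "real n > 0" "ln (real n) > 0"
    using assms(1) by auto
  have \<mu>2: "\<mu>\<^sup>2 = real n * ln (real n)"
    using n by (simp add: \<mu>_def power_mult_distrib real_sqrt_pow2 less_imp_le power2_eq_square[of "real n"])
  have "\<mu> * (\<tau> / 2) = 4 * (real n * (sqrt (ln (real n) / real n))\<^sup>2)"
    by (simp add: \<mu>_def \<tau>_def power2_eq_square)
  also have "\<dots> = 4 * ln (real n)"
    using n by (simp add: real_sqrt_pow2 less_imp_le)
  finally have exponent: "2 * \<mu>\<^sup>2 / real n - \<mu> * (\<tau> / 2) = - ln ((real n)\<^sup>2)"
    using n by (simp add: \<mu>2 ln_realpow)
  have exponential: "exp (2 * \<mu>\<^sup>2 / real n - \<mu> * (\<tau> / 2)) = 1 / (real n)\<^sup>2"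
    unfolding exponent using n by (simp add: exp_minus inverse_eq_divide)
  have "real n * (4 / \<mu>\<^sup>2 * exp (2 * \<mu>\<^sup>2 / real n - \<mu> * (\<tau> / 2)))
      = real n * (4 / (real n * ln (real n)) * (1 / (real n)\<^sup>2))"
    unfolding exponential by (simp only: \<mu>2)
  also have "\<dots> = 4 / (real n ^ 2 * ln (real n))"
    using n by (simp add: power2_eq_square field_simps)
  finally show ?thesis .
qed

(* d balances the bias terms d tau^2 and tau/(d+1); mu = n sqrt u is the Chernoff parameter
   for the noise tail. *)
lemma risk_threshold_est_explicit_le:
  fixes n :: nat
  defines "u \<equiv> ln (real n) / real n"
  assumes n: "2 \<le> n" "64 / real n \<le> (8 * sqrt u)\<^sup>2" "1 / real (n + 1) \<le> 8 * sqrt u"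
    and \<theta>: "\<theta> \<in> Gamma_weighted"
  shows "risk n (threshold_est n (8 * sqrt u)) \<theta>
    \<le> ennreal (5 * ((u powr (-1/4) + 1) * (64 * u) + 8 * sqrt u / u powr (-1/4)) + 4 / (real n ^ 2 * ln (real n)))"
proof -
  define \<tau> where "\<tau> = 8 * sqrt u"
  define \<mu> where "\<mu> = real n * sqrt u"
  define y where "y = u powr (-1/4)"
  define d where "d = nat \<lceil>y\<rceil>"
  have u: "0 < u"
    using n(1) by (simp add: u_def)
  then have y: "0 < y"
    by (simp add: y_def)
  have d: "real d \<le> y + 1" "y \<le> real (d + 1)"
    using y by (simp_all add: d_def of_nat_nat) (use le_of_int_ceiling[of y] in linarith)
  have "risk n (threshold_est n \<tau>) \<theta> \<le> ennreal (5 * (real d * \<tau>\<^sup>2 + \<tau> / real (d + 1))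
      + real n * (4 / \<mu>\<^sup>2 * exp (2 * \<mu>\<^sup>2 / real n - \<mu> * (\<tau> / 2))))"
    using n u by (intro risk_threshold_est_le \<theta>) (auto simp: \<tau>_def \<mu>_def)
  also have "\<dots> \<le> ennreal (5 * ((y + 1) * (64 * u) + \<tau> / y) + 4 / (real n ^ 2 * ln (real n)))"
  proof (intro ennreal_leI add_mono mult_left_mono)
    show "real d * \<tau>\<^sup>2 \<le> (y + 1) * (64 * u)"
      using d u by (simp add: \<tau>_def power_mult_distrib mult_right_mono)
    show "\<tau> / real (d + 1) \<le> \<tau> / y"
      using d y u by (intro divide_left_mono) (auto simp: \<tau>_def)
    show "real n * (4 / \<mu>\<^sup>2 * exp (2 * \<mu>\<^sup>2 / real n - \<mu> * (\<tau> / 2))) \<le> 4 / (real n ^ 2 * ln (real n))"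
      using threshold_tail_term_eq[OF n(1)] by (simp add: \<mu>_def \<tau>_def u_def)
  qed simp
  finally show ?thesis
    by (simp add: \<tau>_def y_def)
qed

lemma eventually_risk_threshold_est_le:
  "\<forall>\<^sub>F n in sequentially. \<forall>\<theta>\<in>Gamma_weighted.
     risk n (threshold_est n (8 * sqrt (ln (real n) / real n))) \<theta>
       \<le> ennreal (361 * (ln (real n) / real n) powr (3 / 4))"
proof -
  have "\<forall>\<^sub>F n in sequentially. 2 \<le> n"
    by (rule eventually_ge_at_top)
  moreover have "\<forall>\<^sub>F n in sequentially. 64 / real n \<le> (8 * sqrt (ln (real n) / real n))\<^sup>2"
    by real_asymp
  moreover have "\<forall>\<^sub>F n in sequentially. 1 / real (n + 1) \<le> 8 * sqrt (ln (real n) / real n)"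
    by real_asymp
  moreover have "\<forall>\<^sub>F n in sequentially.
      5 * (((ln (real n) / real n) powr (-1/4) + 1) * (64 * (ln (real n) / real n))
          + 8 * sqrt (ln (real n) / real n) / (ln (real n) / real n) powr (-1/4))
        + 4 / (real n ^ 2 * ln (real n)) \<le> 361 * (ln (real n) / real n) powr (3 / 4)"
    by real_asymp
  ultimately show ?thesis
  proof eventually_elim
    case (elim n)
    show ?case
    proof
      fix \<theta> :: "nat \<Rightarrow> real"
      assume "\<theta> \<in> Gamma_weighted"
      from risk_threshold_est_explicit_le[OF elim(1-3) this] elim(4)
      show "risk n (threshold_est n (8 * sqrt (ln (real n) / real n))) \<theta>
          \<le> ennreal (361 * (ln (real n) / real n) powr (3 / 4))"
        by (rule order_trans[OF _ ennreal_leI])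
    qed
  qed
qed

lemma rate_le_sq:
  fixes \<epsilon> u :: real
  assumes "0 < \<epsilon>" "0 \<le> u" "u \<le> 3 * \<epsilon> powr (8 / 3) / 10 ^ 4"
  shows "361 * u powr (3 / 4) \<le> \<epsilon>\<^sup>2"
proof -
  define v where "v = 3 * \<epsilon> powr (8 / 3) / 10 ^ 4"
  have v: "0 < v"
    using assms(1) by (simp add: v_def)
  have "361 * u powr (3 / 4) \<le> 361 * v powr (3 / 4)"
    using assms(2,3) by (simp add: v_def powr_mono2)
  also have "\<dots> \<le> \<epsilon>\<^sup>2"
  proof (rule power_le_imp_le_base[where n = 3])
    have "(v powr (3 / 4)) ^ Suc 3 = v ^ 3"
      using v by (simp add: powr_power powr_realpow)
    moreover have "(\<epsilon> powr (8 / 3)) ^ 3 = \<epsilon> ^ 8"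
      using assms(1) by (simp add: powr_power powr_realpow)
    ultimately have "(361 * v powr (3 / 4)) ^ Suc 3 = 361 ^ 4 * 27 / 10 ^ 12 * \<epsilon> ^ 8"
      by (simp add: v_def power_mult_distrib power_divide)
    also have "\<dots> \<le> (\<epsilon>\<^sup>2) ^ Suc 3"
      by (simp add: mult_left_le_one_le flip: power_mult)
    finally show "(361 * v powr (3 / 4)) ^ Suc 3 \<le> (\<epsilon>\<^sup>2) ^ Suc 3" .
  qed simp
  finally show ?thesis .
qed

lemma eventually_achievable:
  "\<forall>\<^sub>F \<epsilon> in at_right 0. achievable Gamma_weighted \<epsilon> (nat \<lceil>10 ^ 4 * \<epsilon> powr (-8/3) * ln (1 / \<epsilon>)\<rceil>)"
proof -
  define x where "x \<epsilon> = 10 ^ 4 * \<epsilon> powr (-8/3) * ln (1 / \<epsilon>)" for \<epsilon> :: real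
  have "filterlim (\<lambda>\<epsilon>. nat \<lceil>x \<epsilon>\<rceil>) sequentially (at_right 0)"
    unfolding x_def by real_asymp
  note eventually_compose_filterlim[OF eventually_risk_threshold_est_le this]
  moreover have "\<forall>\<^sub>F \<epsilon> in at_right (0 :: real). 0 < \<epsilon>"
    by (rule eventually_at_right_less)
  moreover have "\<forall>\<^sub>F \<epsilon> in at_right (0 :: real). 0 < ln (1 / \<epsilon>)"
    by real_asymp
  moreover have "\<forall>\<^sub>F \<epsilon> in at_right 0. exp 1 \<le> x \<epsilon>"
    unfolding x_def by real_asymp
  moreover have "\<forall>\<^sub>F \<epsilon> in at_right 0. ln (x \<epsilon>) \<le> 3 * ln (1 / \<epsilon>)"
    unfolding x_def by real_asymp
  ultimately show ?thesis
  proof eventually_elim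
    case (elim \<epsilon>)
    define n where "n = nat \<lceil>x \<epsilon>\<rceil>"
    have x_pos: "0 < x \<epsilon>"
      using elim(4) exp_gt_zero[of 1] by linarith
    then have x: "exp 1 \<le> x \<epsilon>" "x \<epsilon> \<le> real n"
      using elim(4) le_of_int_ceiling[of "x \<epsilon>"] by (simp_all add: n_def)
    have "ln (real n) / real n \<le> ln (x \<epsilon>) / x \<epsilon>"
      using x by (rule ln_x_over_x_mono)
    also have "\<dots> \<le> 3 * ln (1 / \<epsilon>) / x \<epsilon>"
      using elim(5) x_pos by (intro divide_right_mono) auto
    also have "\<dots> = 3 * \<epsilon> powr (8 / 3) / 10 ^ 4"
      using elim(2,3) by (simp add: x_def powr_minus field_simps)
    finally have "361 * (ln (real n) / real n) powr (3 / 4) \<le> \<epsilon>\<^sup>2"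
      using elim(2) x x_pos by (intro rate_le_sq) auto
    then have "achievable Gamma_weighted \<epsilon> n"
      using elim(1) unfolding achievable_def n_def[symmetric]
      by (intro exI[of _ "threshold_est n (8 * sqrt (ln (real n) / real n))"] conjI allI ballI
          measurable_threshold_est) (auto intro: order_trans ennreal_leI)
    then show ?case
      by (simp add: n_def x_def)
  qed
qed

(* For d = floor (eps^(-2/3)/8) the Assouad bound 1/(128 d^3) exceeds eps^2, which forces 2 n > d^4. *)
lemma eventually_achievable_imp_ge:
  "\<forall>\<^sub>F \<epsilon> in at_right 0. \<forall>n. achievable Gamma_weighted \<epsilon> n \<longrightarrow> \<epsilon> powr (-8/3) / 2 ^ 17 \<le> real n"
proof -
  have "\<forall>\<^sub>F \<epsilon> in at_right (0 :: real). 0 < \<epsilon>"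
    by (rule eventually_at_right_less)
  moreover have "\<forall>\<^sub>F \<epsilon> in at_right (0 :: real). 2 \<le> \<epsilon> powr (-2/3) / 8"
    by real_asymp
  ultimately show ?thesis
  proof eventually_elim
    case (elim \<epsilon>)
    define y where "y = \<epsilon> powr (-2/3) / 8"
    define d where "d = nat \<lfloor>y\<rfloor>"
    have y3: "y ^ 3 = 1 / (512 * \<epsilon>\<^sup>2)" and y4: "y ^ 4 = \<epsilon> powr (-8/3) / 4096"
      using elim(1) by (simp_all add: y_def power_divide powr_power powr_minus_divide power2_eq_square powr_realpow)
    have "2 \<le> y"
      using elim(2) by (simp add: y_def)
    moreover have "real d = of_int \<lfloor>y\<rfloor>"
      using \<open>2 \<le> y\<close> by (simp add: d_def)
    ultimately have d: "1 \<le> d" "real d \<le> y" "y / 2 \<le> real d"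
      using floor_correct[of y] by linarith+
    show ?case
    proof (intro allI impI)
      fix n
      assume ach: "achievable Gamma_weighted \<epsilon> n"
      have "\<not> 2 * real n \<le> real d ^ 4"
      proof
        assume "2 * real n \<le> real d ^ 4"
        with ach d(1) have "1 / (128 * real d ^ 3) \<le> \<epsilon>\<^sup>2"
          by (rule achievable_imp_eps_sq_ge)
        moreover have "1 / (128 * y ^ 3) \<le> 1 / (128 * real d ^ 3)"
          using d by (intro divide_left_mono mult_left_mono power_mono mult_pos_pos) auto
        moreover have "1 / (128 * y ^ 3) = 4 * \<epsilon>\<^sup>2"
          using elim(1) by (simp add: y3)
        ultimately show False
          using elim(1) by (smt (verit) zero_less_power)
      qed
      moreover have "(y / 2) ^ 4 \<le> real d ^ 4"
        using d by (intro power_mono) auto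
      ultimately show "\<epsilon> powr (-8/3) / 2 ^ 17 \<le> real n"
        by (simp add: power_divide y4)
    qed
  qed
qed

lemma n_est_le: "achievable \<Gamma> \<epsilon> n \<Longrightarrow> n_est \<Gamma> \<epsilon> \<le> n"
  unfolding n_est_def by (rule Least_le)

lemma achievable_n_est: "achievable \<Gamma> \<epsilon> n \<Longrightarrow> achievable \<Gamma> \<epsilon> (n_est \<Gamma> \<epsilon>)"
  unfolding n_est_def by (rule LeastI)

lemma eventually_n_est_bounds:
  "\<forall>\<^sub>F \<epsilon> in at_right 0. \<epsilon> powr (-8/3) / 2 ^ 17 \<le> real (n_est Gamma_weighted \<epsilon>)
     \<and> real (n_est Gamma_weighted \<epsilon>) \<le> 2 * 10 ^ 4 * \<epsilon> powr (-8/3) * ln (1 / \<epsilon>)"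
proof -
  have "\<forall>\<^sub>F \<epsilon> in at_right (0 :: real). 1 \<le> 10 ^ 4 * \<epsilon> powr (-8/3) * ln (1 / \<epsilon>)"
    by real_asymp
  with eventually_achievable eventually_achievable_imp_ge show ?thesis
  proof eventually_elim
    case (elim \<epsilon>)
    let ?x = "10 ^ 4 * \<epsilon> powr (-8/3) * ln (1 / \<epsilon>)"
    have "real (n_est Gamma_weighted \<epsilon>) \<le> real (nat \<lceil>?x\<rceil>)"
      using n_est_le[OF elim(1)] by simp
    also have "\<dots> \<le> 2 * ?x"
      using elim(3) by linarith
    finally show ?case
      using elim(2) achievable_n_est[OF elim(1)] by simp
  qed
qed

theorem mainTheorem1:
  shows "\<exists>c C k. c > 0 \<and> C > 0 \<and> k \<ge> 0 \<and>
    (\<forall>\<^sub>F \<epsilon> in at_right (0::real).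
       c * \<epsilon> powr (-8/3) * ln (1/\<epsilon>) powr (-k) \<le> real (n_est Gamma_weighted \<epsilon>) \<and>
       real (n_est Gamma_weighted \<epsilon>) \<le> C * \<epsilon> powr (-8/3) * ln (1/\<epsilon>) powr k)"
proof -
  have "\<forall>\<^sub>F \<epsilon> in at_right (0 :: real). 1 \<le> ln (1 / \<epsilon>)"
    by real_asymp
  with eventually_n_est_bounds have "\<forall>\<^sub>F \<epsilon> in at_right (0::real).
      1 / 2 ^ 17 * \<epsilon> powr (-8/3) * ln (1/\<epsilon>) powr (-1) \<le> real (n_est Gamma_weighted \<epsilon>) \<and>
      real (n_est Gamma_weighted \<epsilon>) \<le> 2 * 10 ^ 4 * \<epsilon> powr (-8/3) * ln (1/\<epsilon>) powr 1"
  proof eventually_elim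
    case (elim \<epsilon>)
    have "1 / 2 ^ 17 * \<epsilon> powr (-8/3) * ln (1/\<epsilon>) powr (-1) \<le> 1 / 2 ^ 17 * \<epsilon> powr (-8/3) * 1"
      using elim(2) by (intro mult_left_mono) (simp_all add: powr_minus inverse_le_1_iff)
    then show ?case
      using elim by simp
  qed
  then show ?thesis
    by (intro exI[of _ "1 / 2 ^ 17"] exI[of _ "2 * 10 ^ 4"] exI[of _ 1]) simp
qed

end
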